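(* Let $n\ge 2$ and let $\sigma=(a_1,\dots,a_m)$ be a data stream with $a_k\in[n]=\{1,\dots,n\}$, with frequency vector $\mathbf{f}=(f_1,\dots,f_n)$, where $f_i$ is the number of $k$ with $a_k=i$. Write $\mathbf{F}_k=\sum_{i=1}^n f_i^k$ for $k\ge 1$, and let $\mathbf{F}_0=n$ denote the number of distinct elements of the stream (every element of $[n]$ occurs in the stream). Let $h:[n]\to\{-1,+1\}$ be a random hash function drawn from a $4$-universal family, and let $X=\left(\sum_{j=1}^n f_j h(j)\right)^2$ be the AMS (Tug-of-war) estimate of $\mathbf{F}_2$; it satisfies $\mathbb{E}[X]=\mathbf{F}_2$ and $\mathrm{Var}(X)=2(\mathbf{F}_2^2-\mathbf{F}_4)$. Then there exist a random variable $Z$ (defined on the same probability space) and a constant $\hat{c}\in\mathbb{R}$ such that $$\mathrm{Var}\big(X+\hat{c}(Z-\mathbb{E}[Z])\big)=\mathrm{Var}(X)-\frac{(\mathbf{F}_1^2-\mathbf{F}_2)^2}{\mathbf{F}_0(\mathbf{F}_0-1)}.$$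
   Context: A random function $h:[n]\to\{-1,+1\}$ is drawn from a $4$-universal family if for all pairwise distinct $i_1,\dots,i_4\in[n]$ and all $z_1,\dots,z_4\in\{-1,+1\}$, $\Pr[h(i_1)=z_1,\dots,h(i_4)=z_4]=1/2^4$ (in particular the values $h(1),\dots,h(n)$ are $4$-wise independent uniform signs). The quantity $X+\hat c(Z-\mathbb{E}[Z])$ is called a control-variate estimator, with control variate $Z$ and coefficient $\hat c$. *)

theory Defs
  imports "HOL-Probability.Probability"
begin

definition freq :: "nat list \<Rightarrow> nat \<Rightarrow> nat" where
  "freq as i = length (filter (\<lambda>a. a = i) as)"

definition Fmom :: "nat \<Rightarrow> nat list \<Rightarrow> nat \<Rightarrow> real" where
  "Fmom n as k = (\<Sum>i=1..n. real (freq as i) ^ k)"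

definition four_universal :: "'w measure \<Rightarrow> ('w \<Rightarrow> nat \<Rightarrow> real) \<Rightarrow> nat \<Rightarrow> bool" where
  "four_universal M h n \<longleftrightarrow>
     (\<forall>i\<in>{1..n}. (\<lambda>\<omega>. h \<omega> i) \<in> borel_measurable M) \<and>
     (\<forall>\<omega>\<in>space M. \<forall>i\<in>{1..n}. h \<omega> i \<in> {-1, 1}) \<and>
     (\<forall>S z. S \<subseteq> {1..n} \<longrightarrow> card S \<le> 4 \<longrightarrow> (\<forall>i\<in>S. z i \<in> {-1, 1::real}) \<longrightarrow>
        prob_space.prob M {\<omega>\<in>space M. \<forall>i\<in>S. h \<omega> i = z i} = 1 / 2 ^ card S)"

end

theory Submission
  imports Defs
begin

(* Take as control variate the tug-of-war estimate of the all-ones frequency vector,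
   Z = (\<Sum>j h(j))^2, whose mean n is known.  By 4-wise independence
   E[h(a) h(b) h(c) h(d)] is 1 if the indices pair up and 0 otherwise, which gives
   Cov(X, Z) = 2 (F1^2 - F2) and Var(Z) = 2 n (n - 1).  The variance of X + c (Z - E Z)
   is the quadratic Var(X) + 2 c Cov(X, Z) + c^2 Var(Z) in c, whose minimum
   Var(X) - Cov(X, Z)^2 / Var(Z) = Var(X) - 2 (F1^2 - F2)^2 / (n (n - 1)) lies below the
   claimed value, so a root of a quadratic equation in c attains it exactly. *)

context prob_space
begin

definition covariance :: "('a \<Rightarrow> real) \<Rightarrow> ('a \<Rightarrow> real) \<Rightarrow> real" where
  "covariance X Z = expectation (\<lambda>\<omega>. (X \<omega> - expectation X) * (Z \<omega> - expectation Z))"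

lemma covariance_self: "covariance X X = variance X"
  by (simp add: covariance_def power2_eq_square)

lemma covariance_eq:
  fixes X Z :: "'a \<Rightarrow> real"
  assumes "integrable M X" "integrable M Z" "integrable M (\<lambda>\<omega>. X \<omega> * Z \<omega>)"
  shows "covariance X Z = expectation (\<lambda>\<omega>. X \<omega> * Z \<omega>) - expectation X * expectation Z"
  using assms by (simp add: covariance_def algebra_simps prob_space)

lemma square_integrable_imp_integrable_mult:
  fixes X Z :: "'a \<Rightarrow> real"
  assumes "X \<in> borel_measurable M" "Z \<in> borel_measurable M"
    and "integrable M (\<lambda>\<omega>. X \<omega> ^ 2)" "integrable M (\<lambda>\<omega>. Z \<omega> ^ 2)"
  shows "integrable M (\<lambda>\<omega>. X \<omega> * Z \<omega>)"
proof (rule Bochner_Integration.integrable_bound)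
  show "integrable M (\<lambda>\<omega>. X \<omega> ^ 2 + Z \<omega> ^ 2)"
    using assms by simp
  have "\<bar>x * z\<bar> \<le> x ^ 2 + z ^ 2" for x z :: real
  proof -
    have "2 * (\<bar>x\<bar> * \<bar>z\<bar>) \<le> x ^ 2 + z ^ 2"
      using zero_le_square[of "\<bar>x\<bar> - \<bar>z\<bar>"] by (simp add: power2_eq_square algebra_simps)
    then show ?thesis
      using abs_ge_zero[of "x * z"] unfolding abs_mult by linarith
  qed
  then show "AE \<omega> in M. norm (X \<omega> * Z \<omega>) \<le> norm (X \<omega> ^ 2 + Z \<omega> ^ 2)"
    by simp
qed (use assms in simp)

lemma variance_control_variate:
  fixes X Z :: "'a \<Rightarrow> real"
  assumes "X \<in> borel_measurable M" "Z \<in> borel_measurable M"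
    and "integrable M (\<lambda>\<omega>. X \<omega> ^ 2)" "integrable M (\<lambda>\<omega>. Z \<omega> ^ 2)"
  shows "variance (\<lambda>\<omega>. X \<omega> + c * (Z \<omega> - expectation Z))
           = variance X + 2 * c * covariance X Z + c ^ 2 * variance Z"
proof -
  have [simp]: "integrable M X" "integrable M Z" "integrable M (\<lambda>\<omega>. X \<omega> * Z \<omega>)"
    using assms
    by (auto intro: square_integrable_imp_integrable square_integrable_imp_integrable_mult)
  note [simp] = assms(3,4)
  have centered: "integrable M (\<lambda>\<omega>. (X \<omega> - a) * (Z \<omega> - b))"
    "integrable M (\<lambda>\<omega>. (X \<omega> - a) ^ 2)" "integrable M (\<lambda>\<omega>. (Z \<omega> - b) ^ 2)" for a b
    by (simp_all add: algebra_simps power2_eq_square[symmetric] power2_diff)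
  have mean: "expectation (\<lambda>\<omega>. X \<omega> + c * (Z \<omega> - expectation Z)) = expectation X"
    by (simp add: prob_space)
  have "variance (\<lambda>\<omega>. X \<omega> + c * (Z \<omega> - expectation Z))
      = expectation (\<lambda>\<omega>. (X \<omega> - expectation X) ^ 2
          + 2 * c * ((X \<omega> - expectation X) * (Z \<omega> - expectation Z))
          + c ^ 2 * (Z \<omega> - expectation Z) ^ 2)"
    unfolding mean
    by (rule Bochner_Integration.integral_cong) (simp_all add: power2_eq_square algebra_simps)
  also have "\<dots> = variance X + 2 * c * covariance X Z + c ^ 2 * variance Z"
    using centered by (simp add: covariance_def)
  finally show ?thesis .
qed

lemma variance_control_variate_attains:
  fixes X Z :: "'a \<Rightarrow> real"
  assumes "X \<in> borel_measurable M" "Z \<in> borel_measurable M"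
    and "integrable M (\<lambda>\<omega>. X \<omega> ^ 2)" "integrable M (\<lambda>\<omega>. Z \<omega> ^ 2)"
    and "variance Z > 0" "0 \<le> r" "r \<le> covariance X Z ^ 2 / variance Z"
  shows "\<exists>c. variance (\<lambda>\<omega>. X \<omega> + c * (Z \<omega> - expectation Z)) = variance X - r"
proof -
  let ?C = "covariance X Z" and ?V = "variance Z"
  define s where "s = sqrt (?C ^ 2 - ?V * r)"
  have "?V > 0" "r * ?V \<le> ?C ^ 2"
    using assms(5,7) by (simp_all add: pos_le_divide_eq)
  then have s_sq: "s ^ 2 = ?C ^ 2 - ?V * r"
    by (simp add: s_def mult.commute)
  \<comment> \<open>\<open>(s - C) / V\<close> is a root of \<open>V c\<^sup>2 + 2 C c + r\<close>\<close>
  have "2 * ((s - ?C) / ?V) * ?C + ((s - ?C) / ?V) ^ 2 * ?V = (s ^ 2 - ?C ^ 2) / ?V"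
    using \<open>?V > 0\<close> by (simp add: field_simps power2_eq_square)
  also have "\<dots> = - r"
    using \<open>?V > 0\<close> by (simp add: s_sq)
  finally show ?thesis
    using variance_control_variate[OF assms(1-4), of "(s - ?C) / ?V"]
    by (intro exI[of _ "(s - ?C) / ?V"]) linarith
qed

end

lemma sum_mult_of_bool_eq_single:
  "finite A \<Longrightarrow> c \<in> A \<Longrightarrow> (\<Sum>d\<in>A. f d * of_bool (c = d)) = (f c :: 'a :: semiring_1)"
  by (simp add: sum.delta)

locale four_universal_signs = prob_space M for M :: "'w measure" +
  fixes h :: "'w \<Rightarrow> nat \<Rightarrow> real" and n :: nat
  assumes four_universal: "four_universal M h n"
begin

lemma sign_measurable: "i \<in> {1..n} \<Longrightarrow> (\<lambda>\<omega>. h \<omega> i) \<in> borel_measurable M"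
  using four_universal unfolding four_universal_def by blast

lemma sign_values: "\<omega> \<in> space M \<Longrightarrow> i \<in> {1..n} \<Longrightarrow> h \<omega> i \<in> {-1, 1}"
  using four_universal unfolding four_universal_def by blast

lemma prob_signs_agree:
  "S \<subseteq> {1..n} \<Longrightarrow> card S \<le> 4 \<Longrightarrow> (\<forall>i\<in>S. z i \<in> {-1, 1}) \<Longrightarrow>
   prob {\<omega>\<in>space M. \<forall>i\<in>S. h \<omega> i = z i} = 1 / 2 ^ card S"
  using four_universal unfolding four_universal_def by blast

lemma abs_sign: "\<omega> \<in> space M \<Longrightarrow> i \<in> {1..n} \<Longrightarrow> \<bar>h \<omega> i\<bar> = 1"
  using sign_values by fastforce

lemma sets_signs_agree:
  assumes "finite S" "S \<subseteq> {1..n}"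
  shows "{\<omega>\<in>space M. \<forall>i\<in>S. h \<omega> i = z i} \<in> sets M"
proof (rule sets.sets_Collect_finite_All[OF _ assms(1)])
  fix i assume "i \<in> S"
  then have "(\<lambda>\<omega>. h \<omega> i) -` {z i} \<inter> space M \<in> sets M"
    using assms(2) by (intro measurable_sets[OF sign_measurable]) auto
  then show "{\<omega>\<in>space M. h \<omega> i = z i} \<in> sets M"
    by (simp add: vimage_def Int_def conj_commute)
qed

lemma expectation_prod_signs:
  assumes S: "S \<subseteq> {1..n}" "card S \<le> 4"
  shows "expectation (\<lambda>\<omega>. \<Prod>i\<in>S. h \<omega> i) = of_bool (S = {})"
proof -
  have fin: "finite S" using S finite_subset by blast
  let ?P = "PiE S (\<lambda>_. {-1, 1::real})"
  let ?A = "\<lambda>z. {\<omega>\<in>space M. \<forall>i\<in>S. h \<omega> i = z i}"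
  have pointwise: "(\<Prod>i\<in>S. h \<omega> i) = (\<Sum>z\<in>?P. (\<Prod>i\<in>S. z i) * indicator (?A z) \<omega>)"
    if \<omega>: "\<omega> \<in> space M" for \<omega>
  proof -
    have "\<omega> \<in> ?A z \<longleftrightarrow> z = restrict (h \<omega>) S" if "z \<in> ?P" for z
      using that \<omega> by (auto simp: PiE_iff extensional_def)
    moreover have "restrict (h \<omega>) S \<in> ?P"
      using sign_values[OF \<omega>] S by (fastforce simp: PiE_iff)
    ultimately show ?thesis
      using fin
      by (simp add: indicator_def if_distrib[of "\<lambda>t. _ * t"] sum.delta' finite_PiE cong: sum.cong)
  qed
  have "expectation (\<lambda>\<omega>. \<Prod>i\<in>S. h \<omega> i)
      = expectation (\<lambda>\<omega>. \<Sum>z\<in>?P. (\<Prod>i\<in>S. z i) * indicator (?A z) \<omega>)"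
    by (rule Bochner_Integration.integral_cong[OF refl pointwise])
  also have "\<dots> = (\<Sum>z\<in>?P. expectation (\<lambda>\<omega>. (\<Prod>i\<in>S. z i) * indicator (?A z) \<omega>))"
    using sets_signs_agree[OF fin S(1)]
    by (intro Bochner_Integration.integral_sum integrable_mult_right integrable_real_indicator)
      (simp_all add: emeasure_finite less_top[symmetric])
  also have "\<dots> = (\<Sum>z\<in>?P. (\<Prod>i\<in>S. z i) * prob (?A z))"
    using sets_signs_agree[OF fin S(1)] by (simp add: Int_absorb2 sets.sets_into_space)
  also have "\<dots> = (\<Sum>z\<in>?P. \<Prod>i\<in>S. z i) / 2 ^ card S"
    using prob_signs_agree[OF S] by (simp add: PiE_iff sum_divide_distrib)
  also have "(\<Sum>z\<in>?P. \<Prod>i\<in>S. z i) = (\<Prod>i\<in>S. \<Sum>t\<in>{-1, 1::real}. t)"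
    by (rule prod_sum_PiE[OF fin, symmetric]) simp
  also have "\<dots> = of_bool (S = {})"
    using fin by (simp add: card_gt_0_iff)
  finally show ?thesis by simp
qed

lemma expectation_four_signs:
  assumes abcd: "a \<in> {1..n}" "b \<in> {1..n}" "c \<in> {1..n}" "d \<in> {1..n}"
  shows "expectation (\<lambda>\<omega>. h \<omega> a * h \<omega> b * h \<omega> c * h \<omega> d)
           = of_bool (a = b \<and> c = d \<or> a = c \<and> b = d \<or> a = d \<and> b = c)"
proof -
  let ?m = "mset [a, b, c, d]"
  define odd_part where "odd_part = {i\<in>{a, b, c, d}. odd (count ?m i)}"
  have sign_power: "x ^ k = (if odd k then x else 1)" if "x \<in> {-1, 1}" for x :: real and k
    using that by auto
  \<comment> \<open>signs square to 1, so only the indices of odd multiplicity survive\<close>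
  have pointwise: "h \<omega> a * h \<omega> b * h \<omega> c * h \<omega> d = (\<Prod>i\<in>odd_part. h \<omega> i)"
    if \<omega>: "\<omega> \<in> space M" for \<omega>
  proof -
    have "h \<omega> a * h \<omega> b * h \<omega> c * h \<omega> d = prod_mset (image_mset (h \<omega>) ?m)"
      by simp
    also have "\<dots> = (\<Prod>i\<in>set_mset ?m. h \<omega> i ^ count ?m i)"
      by (rule image_prod_mset_multiplicity)
    also have "\<dots> = (\<Prod>i\<in>{a, b, c, d}. if odd (count ?m i) then h \<omega> i else 1)"
    proof (rule prod.cong)
      fix i assume "i \<in> {a, b, c, d}"
      then show "h \<omega> i ^ count ?m i = (if odd (count ?m i) then h \<omega> i else 1)"
        using sign_values[OF \<omega>] abcd by (intro sign_power) auto
    qed simp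
    also have "\<dots> = (\<Prod>i\<in>odd_part. h \<omega> i)"
      unfolding odd_part_def by (rule prod.inter_filter[symmetric]) simp
    finally show ?thesis .
  qed
  have odd_part_subset: "odd_part \<subseteq> {a, b, c, d}"
    unfolding odd_part_def by blast
  then have "card odd_part \<le> card {a, b, c, d}"
    by (intro card_mono) simp_all
  also have "\<dots> \<le> 4"
    by (simp add: card_insert_le_m1)
  finally have "expectation (\<lambda>\<omega>. \<Prod>i\<in>odd_part. h \<omega> i) = of_bool (odd_part = {})"
    using odd_part_subset abcd by (intro expectation_prod_signs) auto
  moreover have "odd_part = {} \<longleftrightarrow> (a = b \<and> c = d \<or> a = c \<and> b = d \<or> a = d \<and> b = c)"
    unfolding odd_part_def
    by (cases "a = b"; cases "a = c"; cases "a = d"; cases "b = c"; cases "b = d"; cases "c = d") auto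
  ultimately show ?thesis
    by (simp add: Bochner_Integration.integral_cong[OF refl pointwise])
qed

lemma expectation_two_signs:
  assumes "a \<in> {1..n}" "b \<in> {1..n}"
  shows "expectation (\<lambda>\<omega>. h \<omega> a * h \<omega> b) = of_bool (a = b)"
proof -
  have "h \<omega> a * h \<omega> b = h \<omega> a * h \<omega> b * h \<omega> b * h \<omega> b" if "\<omega> \<in> space M" for \<omega>
  proof -
    have "h \<omega> b * h \<omega> b = 1"
      using sign_values[OF that assms(2)] by auto
    then show ?thesis by (simp add: mult.assoc)
  qed
  then have "expectation (\<lambda>\<omega>. h \<omega> a * h \<omega> b)
      = expectation (\<lambda>\<omega>. h \<omega> a * h \<omega> b * h \<omega> b * h \<omega> b)"
    by (rule Bochner_Integration.integral_cong[OF refl])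
  also have "\<dots> = of_bool (a = b)"
    using expectation_four_signs[OF assms assms(2) assms(2)] by simp
  finally show ?thesis .
qed

lemma integrable_two_signs:
  "a \<in> {1..n} \<Longrightarrow> b \<in> {1..n} \<Longrightarrow> integrable M (\<lambda>\<omega>. h \<omega> a * h \<omega> b)"
  by (intro integrable_const_bound[where B = 1] AE_I2 borel_measurable_times sign_measurable)
    (simp_all add: abs_mult abs_sign)

lemma integrable_four_signs:
  "a \<in> {1..n} \<Longrightarrow> b \<in> {1..n} \<Longrightarrow> c \<in> {1..n} \<Longrightarrow> d \<in> {1..n} \<Longrightarrow>
   integrable M (\<lambda>\<omega>. h \<omega> a * h \<omega> b * h \<omega> c * h \<omega> d)"
  by (intro integrable_const_bound[where B = 1] AE_I2 borel_measurable_times sign_measurable)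
    (simp_all add: abs_mult abs_sign)

definition sketch :: "(nat \<Rightarrow> real) \<Rightarrow> 'w \<Rightarrow> real" where
  "sketch u \<omega> = (\<Sum>j=1..n. u j * h \<omega> j)"

lemma sketch_measurable: "sketch u \<in> borel_measurable M"
  unfolding sketch_def by (intro borel_measurable_sum borel_measurable_times sign_measurable) auto

lemma sketch_product2_expand:
  "sketch u \<omega> * sketch v \<omega> = (\<Sum>a=1..n. \<Sum>b=1..n. u a * v b * (h \<omega> a * h \<omega> b))"
  unfolding sketch_def
  by (simp add: sum_distrib_left sum_distrib_right mult_ac) (subst sum.swap, simp add: mult_ac)

lemma sketch_product4_expand:
  "sketch u \<omega> * sketch v \<omega> * sketch w \<omega> * sketch x \<omega> =
     (\<Sum>a=1..n. \<Sum>b=1..n. \<Sum>c=1..n. \<Sum>d=1..n.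
        u a * v b * w c * x d * (h \<omega> a * h \<omega> b * h \<omega> c * h \<omega> d))"
  unfolding sketch_def
  by (simp add: sum_distrib_left sum_distrib_right mult_ac) (subst sum.swap, simp add: mult_ac)

lemma integrable_sketch_product2: "integrable M (\<lambda>\<omega>. sketch u \<omega> * sketch v \<omega>)"
  unfolding sketch_product2_expand
  by (intro Bochner_Integration.integrable_sum integrable_mult_right integrable_two_signs) auto

lemma integrable_sketch_product4:
  "integrable M (\<lambda>\<omega>. sketch u \<omega> * sketch v \<omega> * sketch w \<omega> * sketch x \<omega>)"
  unfolding sketch_product4_expand
  by (intro Bochner_Integration.integrable_sum integrable_mult_right integrable_four_signs) auto

lemma expectation_sketch_product2:
  "expectation (\<lambda>\<omega>. sketch u \<omega> * sketch v \<omega>) = (\<Sum>a=1..n. u a * v a)"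
proof -
  have "expectation (\<lambda>\<omega>. sketch u \<omega> * sketch v \<omega>)
      = (\<Sum>a=1..n. \<Sum>b=1..n. u a * v b * of_bool (a = b))"
    unfolding sketch_product2_expand
    by (simp add: Bochner_Integration.integral_sum integrable_two_signs expectation_two_signs
        del: atLeastAtMost_iff sum_mult_of_bool_eq)
  then show ?thesis
    by (simp add: sum_mult_of_bool_eq_single del: sum_mult_of_bool_eq)
qed

lemma expectation_sketch_product4:
  "expectation (\<lambda>\<omega>. sketch u \<omega> * sketch v \<omega> * sketch w \<omega> * sketch x \<omega>) =
     (\<Sum>a=1..n. u a * v a) * (\<Sum>a=1..n. w a * x a)
   + (\<Sum>a=1..n. u a * w a) * (\<Sum>a=1..n. v a * x a)
   + (\<Sum>a=1..n. u a * x a) * (\<Sum>a=1..n. v a * w a)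
   - 2 * (\<Sum>a=1..n. u a * v a * w a * x a)"
proof -
  let ?K = "\<lambda>a b c d. u a * v b * w c * x d"
  have pairing: "(of_bool (a = b \<and> c = d \<or> a = c \<and> b = d \<or> a = d \<and> b = c) :: real) =
      of_bool (a = b) * of_bool (c = d) + of_bool (a = c) * of_bool (b = d)
      + of_bool (b = c) * of_bool (a = d) - 2 * (of_bool (a = b) * of_bool (a = c) * of_bool (a = d))"
    for a b c d :: nat
    by auto
  have "expectation (\<lambda>\<omega>. sketch u \<omega> * sketch v \<omega> * sketch w \<omega> * sketch x \<omega>)
      = (\<Sum>a=1..n. \<Sum>b=1..n. \<Sum>c=1..n. \<Sum>d=1..n.
           ?K a b c d * of_bool (a = b \<and> c = d \<or> a = c \<and> b = d \<or> a = d \<and> b = c))"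
    unfolding sketch_product4_expand
    by (simp add: Bochner_Integration.integral_sum integrable_four_signs expectation_four_signs
        del: atLeastAtMost_iff of_bool_or_iff sum_mult_of_bool_eq)
  also have "\<dots> = (\<Sum>a=1..n. \<Sum>b=1..n. \<Sum>c=1..n. \<Sum>d=1..n. ?K a b c d * of_bool (a = b) * of_bool (c = d))
      + (\<Sum>a=1..n. \<Sum>b=1..n. \<Sum>c=1..n. \<Sum>d=1..n. ?K a b c d * of_bool (a = c) * of_bool (b = d))
      + (\<Sum>a=1..n. \<Sum>b=1..n. \<Sum>c=1..n. \<Sum>d=1..n. ?K a b c d * of_bool (b = c) * of_bool (a = d))
      - 2 * (\<Sum>a=1..n. \<Sum>b=1..n. \<Sum>c=1..n. \<Sum>d=1..n.
               ?K a b c d * of_bool (a = b) * of_bool (a = c) * of_bool (a = d))"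
    unfolding pairing by (simp add: algebra_simps sum.distrib sum_subtractf sum_distrib_left)
  also have "\<dots> = (\<Sum>a=1..n. u a * v a) * (\<Sum>a=1..n. w a * x a)
      + (\<Sum>a=1..n. u a * w a) * (\<Sum>a=1..n. v a * x a)
      + (\<Sum>a=1..n. u a * x a) * (\<Sum>a=1..n. v a * w a)
      - 2 * (\<Sum>a=1..n. u a * v a * w a * x a)"
    by (simp add: sum_mult_of_bool_eq_single sum_distrib_right[symmetric] del: sum_mult_of_bool_eq)
      (simp add: sum_product, simp add: sum_distrib_left mult_ac)
  finally show ?thesis .
qed

lemma square_integrable_sketch_square: "integrable M (\<lambda>\<omega>. (sketch u \<omega> ^ 2) ^ 2)"
  using integrable_sketch_product4[of u u u u] by (simp add: power2_eq_square mult.assoc)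

lemma covariance_sketch_squares:
  "covariance (\<lambda>\<omega>. sketch u \<omega> ^ 2) (\<lambda>\<omega>. sketch v \<omega> ^ 2)
     = 2 * ((\<Sum>a=1..n. u a * v a) ^ 2 - (\<Sum>a=1..n. u a ^ 2 * v a ^ 2))"
proof -
  have square: "sketch u \<omega> ^ 2 = sketch u \<omega> * sketch u \<omega>" for u \<omega>
    by (simp add: power2_eq_square)
  have "covariance (\<lambda>\<omega>. sketch u \<omega> ^ 2) (\<lambda>\<omega>. sketch v \<omega> ^ 2)
      = expectation (\<lambda>\<omega>. sketch u \<omega> * sketch u \<omega> * sketch v \<omega> * sketch v \<omega>)
        - expectation (\<lambda>\<omega>. sketch u \<omega> * sketch u \<omega>) * expectation (\<lambda>\<omega>. sketch v \<omega> * sketch v \<omega>)"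
    unfolding square
    by (subst covariance_eq) (simp_all add: integrable_sketch_product2 mult.assoc
        integrable_sketch_product4[of u u v v, simplified mult.assoc])
  also have "\<dots> = 2 * ((\<Sum>a=1..n. u a * v a) ^ 2 - (\<Sum>a=1..n. u a ^ 2 * v a ^ 2))"
    by (simp only: expectation_sketch_product2 expectation_sketch_product4)
      (simp add: power2_eq_square algebra_simps)
  finally show ?thesis .
qed

end

theorem theorem1:
  fixes M :: "'w measure" and h :: "'w \<Rightarrow> nat \<Rightarrow> real"
    and n :: nat and as :: "nat list"
  assumes "prob_space M"
    and "n \<ge> 2"
    and "set as = {1..n}"
    and "four_universal M h n"
  defines "X \<equiv> (\<lambda>\<omega>. (\<Sum>j=1..n. real (freq as j) * h \<omega> j) ^ 2)"
  shows "\<exists>(Z::'w \<Rightarrow> real) (c::real).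
           Z \<in> borel_measurable M \<and> integrable M (\<lambda>\<omega>. Z \<omega> ^ 2) \<and>
           prob_space.variance M (\<lambda>\<omega>. X \<omega> + c * (Z \<omega> - prob_space.expectation M Z))
             = prob_space.variance M X
               - (Fmom n as 1 ^ 2 - Fmom n as 2) ^ 2 / (real n * (real n - 1))"
proof -
  \<comment> \<open>\<open>set as = {1..n}\<close> only says that \<open>n\<close> is \<open>F\<^sub>0\<close>; the proof does not need it\<close>
  interpret four_universal_signs M h n
    using assms(1,4) by (simp add: four_universal_signs_def four_universal_signs_axioms_def)
  define f where "f j = real (freq as j)" for j
  define Z where "Z = (\<lambda>\<omega>. sketch (\<lambda>_. 1) \<omega> ^ 2)"
  define A where "A = Fmom n as 1 ^ 2 - Fmom n as 2"
  define N where "N = real n * (real n - 1)"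
  have "N > 0" using assms(2) by (simp add: N_def)
  have X_sketch: "X = (\<lambda>\<omega>. sketch f \<omega> ^ 2)"
    by (simp add: X_def sketch_def f_def)
  have measurable: "X \<in> borel_measurable M" "Z \<in> borel_measurable M"
    unfolding X_sketch Z_def by (intro borel_measurable_power sketch_measurable)+
  have square_integrable: "integrable M (\<lambda>\<omega>. X \<omega> ^ 2)" "integrable M (\<lambda>\<omega>. Z \<omega> ^ 2)"
    unfolding X_sketch Z_def by (fact square_integrable_sketch_square)+
  have "covariance X Z = 2 * A"
    by (simp add: X_sketch Z_def covariance_sketch_squares A_def Fmom_def f_def)
  moreover have "variance Z = 2 * N"
    unfolding covariance_self[symmetric] Z_def covariance_sketch_squares
    by (simp add: N_def power2_eq_square algebra_simps)
  ultimately have "A ^ 2 / N \<le> covariance X Z ^ 2 / variance Z" "0 < variance Z"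
    using \<open>N > 0\<close> by (simp_all add: power2_eq_square field_simps)
  then obtain c where "variance (\<lambda>\<omega>. X \<omega> + c * (Z \<omega> - expectation Z)) = variance X - A ^ 2 / N"
    using variance_control_variate_attains[OF measurable square_integrable] \<open>N > 0\<close> by force
  then show ?thesis
    unfolding A_def N_def using measurable square_integrable by blast
qed

end
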